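(* Let $M$ and $N$ be $\lambda$-terms. If there is no $M'$ with $M \twoheadrightarrow_\beta M'$ and $\mathrm{BT}^c(M') \le \mathrm{BT}^c(N)$ (i.e. no reduct of $M$ improves $N$ globally), then $M \neq_\beta N$.
   Context: Untyped $\lambda$-calculus modulo $\alpha$. A head reduction step is a $\beta$-step $\lambda x_1\ldots x_n.(\lambda y.P)QQ_1\ldots Q_m \to \lambda x_1\ldots x_n.P[y:=Q]Q_1\ldots Q_m$ ($n,m\ge0$); a head normal form (hnf) is a term $\lambda x_1\ldots x_n.\,yQ_1\ldots Q_m$. The clocked Böhm tree $\mathrm{BT}^c(M)$ is defined coinductively: $\bot$ if $M$ has no hnf; otherwise, if the head reduction of $M$ to hnf is $M \to_h^k \lambda x_1\ldots x_n.\,yM_1\ldots M_m$ ($k$ steps), then $\mathrm{BT}^c(M)$ is $\lambda x_1\ldots x_n.\,y\,\mathrm{BT}^c(M_1)\ldots\mathrm{BT}^c(M_m)$ with its root node annotated by $k$. Positions are sequences over $\{0,1,2\}$ ($0$: body of abstraction, $1$: function part, $2$: argument of application). For annotated trees, $T_1 \le T_2$ means: $T_1,T_2$ coincide after erasing annotations, and at every position $p$ either neither subtree at $p$ has a root annotation or both do with annotations $k_1 \le k_2$. *)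

theory Defs
  imports Main
begin

datatype dB = Var nat | App dB dB | Abs dB

primrec lift :: "dB \<Rightarrow> nat \<Rightarrow> dB" where
  "lift (Var i) k = (if i < k then Var i else Var (i + 1))"
| "lift (App s t) k = App (lift s k) (lift t k)"
| "lift (Abs s) k = Abs (lift s (k + 1))"

primrec subst :: "dB \<Rightarrow> dB \<Rightarrow> nat \<Rightarrow> dB" where
  "subst (Var i) s k = (if k < i then Var (i - 1) else if i = k then s else Var i)"
| "subst (App t u) s k = App (subst t s k) (subst u s k)"
| "subst (Abs t) s k = Abs (subst t (lift s 0) (k + 1))"

inductive beta :: "dB \<Rightarrow> dB \<Rightarrow> bool" where
  beta_redex: "beta (App (Abs s) t) (subst s t 0)"
| beta_appL: "beta s t \<Longrightarrow> beta (App s u) (App t u)"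
| beta_appR: "beta s t \<Longrightarrow> beta (App u s) (App u t)"
| beta_abs: "beta s t \<Longrightarrow> beta (Abs s) (Abs t)"

abbreviation beta_red :: "dB \<Rightarrow> dB \<Rightarrow> bool" where
  "beta_red \<equiv> beta\<^sup>*\<^sup>*"

abbreviation beta_eq :: "dB \<Rightarrow> dB \<Rightarrow> bool" where
  "beta_eq \<equiv> (sup beta beta\<inverse>\<inverse>)\<^sup>*\<^sup>*"

inductive head :: "dB \<Rightarrow> dB \<Rightarrow> bool" where
  head_redex: "head (App (Abs s) t) (subst s t 0)"
| head_app: "head s s' \<Longrightarrow> (\<forall>b. s \<noteq> Abs b) \<Longrightarrow> head (App s u) (App s' u)"
| head_abs: "head s s' \<Longrightarrow> head (Abs s) (Abs s')"

fun is_var_app :: "dB \<Rightarrow> bool" where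
  "is_var_app (Var i) = True"
| "is_var_app (App s t) = is_var_app s"
| "is_var_app (Abs s) = False"

fun is_hnf :: "dB \<Rightarrow> bool" where
  "is_hnf (Abs s) = is_hnf s"
| "is_hnf t = is_var_app t"

definition has_hnf :: "dB \<Rightarrow> bool" where
  "has_hnf M \<longleftrightarrow> (\<exists>k H. (head ^^ k) M H \<and> is_hnf H)"

definition hsteps :: "dB \<Rightarrow> nat" where
  "hsteps M = (LEAST k. \<exists>H. (head ^^ k) M H \<and> is_hnf H)"

definition hnf_of :: "dB \<Rightarrow> dB" where
  "hnf_of M = (THE H. (head ^^ hsteps M) M H \<and> is_hnf H)"

text \<open>Positions: lists over {0,1,2}: 0 body of abstraction, 1 function part,
  2 argument of an application.\<close>
type_synonym pos = "nat list"

datatype node = NBot | NVar nat | NAbs | NApp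

text \<open>An annotated tree maps each position of the tree to its node label and
  an optional annotation; positions outside the tree are mapped to None.\<close>
type_synonym atree = "pos \<Rightarrow> (node \<times> nat option) option"

fun root_node :: "dB \<Rightarrow> node" where
  "root_node (Var i) = NVar i"
| "root_node (Abs s) = NAbs"
| "root_node (App s t) = NApp"

function (sequential) bt :: "dB \<Rightarrow> atree"
  and spine :: "dB \<Rightarrow> nat option \<Rightarrow> atree" where
  "bt M p =
     (if has_hnf M then spine (hnf_of M) (Some (hsteps M)) p
      else if p = [] then Some (NBot, None) else None)"
| "spine H a [] = Some (root_node H, a)"
| "spine (Abs t) a (0 # p) = spine t None p"
| "spine (App s t) a (Suc 0 # p) = spine s None p"
| "spine (App s t) a (Suc (Suc 0) # p) = bt t p"
| "spine H a p = None"
  by pat_completeness auto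
termination
  by (relation "measure (\<lambda>x. case x of Inl (M, p) \<Rightarrow> 2 * length p + 1
                                      | Inr (H, a, p) \<Rightarrow> 2 * length p)") auto

abbreviation BTc :: "dB \<Rightarrow> atree" where
  "BTc M \<equiv> bt M"

definition atree_le :: "atree \<Rightarrow> atree \<Rightarrow> bool" where
  "atree_le T1 T2 \<longleftrightarrow>
     (\<forall>p. map_option fst (T1 p) = map_option fst (T2 p)) \<and>
     (\<forall>p x1 x2. T1 p = Some x1 \<longrightarrow> T2 p = Some x2 \<longrightarrow>
        (snd x1 = None \<and> snd x2 = None) \<or>
        (\<exists>k1 k2. snd x1 = Some k1 \<and> snd x2 = Some k2 \<and> k1 \<le> k2))"

end

theory Submission
  imports Defs "HOL-Library.Confluence"
begin

text \<open>
  If \<open>M =\<^sub>\<beta> N\<close> then, by Church--Rosser, \<open>M\<close> and \<open>N\<close> have a common reduct \<open>Z\<close>, so it suffices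
  that reduction can only improve clocked Boehm trees: \<open>N \<twoheadrightarrow>\<^sub>\<beta> Z\<close> implies
  \<open>BT\<^sup>c(Z) \<le> BT\<^sup>c(N)\<close>. This is checked for a single parallel reduction step \<open>N \<Rightarrow> Z\<close>.
  A head step of \<open>N\<close> is either contracted by the parallel step or can be replayed after it,
  so \<open>Z\<close> reaches a head normal form in at most as many head steps, and that hnf is a parallel
  reduct of the one of \<open>N\<close>; conversely, by standardization, a term without hnf has no reduct
  with an hnf. Induction on positions then compares the two trees node by node.
\<close>

section \<open>Substitution\<close>

lemma lift_lift:
  "i < k + 1 \<Longrightarrow> lift (lift t i) (Suc k) = lift (lift t k) i"
  by (induct t arbitrary: i k) auto

lemma lift_subst [simp]:
  "j < i + 1 \<Longrightarrow> lift (subst t s j) i = subst (lift t (i + 1)) (lift s i) j"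
  by (induct t arbitrary: i j s) (simp_all add: diff_Suc lift_lift split: nat.split)

lemma lift_subst_lt:
  "i < j + 1 \<Longrightarrow> lift (subst t s j) i = subst (lift t i) (lift s i) (j + 1)"
  by (induct t arbitrary: i j s) (auto simp: lift_lift)

lemma subst_lift [simp]: "subst (lift t k) s k = t"
  by (induct t arbitrary: k s) simp_all

lemma subst_subst:
  "i < j + 1 \<Longrightarrow> subst (subst t (lift v i) (Suc j)) (subst u v j) i = subst (subst t u i) v j"
  by (induct t arbitrary: i j u v)
    (simp_all add: diff_Suc lift_lift [symmetric] lift_subst_lt split: nat.split)

section \<open>Parallel reduction and confluence\<close>

inductive par :: "dB \<Rightarrow> dB \<Rightarrow> bool" where
  par_var [simp, intro!]: "par (Var n) (Var n)"
| par_abs [simp, intro!]: "par s s' \<Longrightarrow> par (Abs s) (Abs s')"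
| par_app [simp, intro!]: "par s s' \<Longrightarrow> par t t' \<Longrightarrow> par (App s t) (App s' t')"
| par_beta [simp, intro!]: "par s s' \<Longrightarrow> par t t' \<Longrightarrow> par (App (Abs s) t) (subst s' t' 0)"

inductive_cases par_cases [elim!]:
  "par (Var n) t"
  "par (Abs s) t"
  "par (App s t) u"

lemma par_refl [simp, intro!]: "par t t"
  by (induct t) simp_all

lemma par_lift [simp, intro]: "par s s' \<Longrightarrow> par (lift s k) (lift s' k)"
  by (induct s s' arbitrary: k rule: par.induct) auto

lemma par_subst [intro]:
  "par s s' \<Longrightarrow> par t t' \<Longrightarrow> par (subst s t n) (subst s' t' n)"
proof (induct s s' arbitrary: t t' n rule: par.induct)
  case (par_beta s s' u u')
  then show ?case
    by (metis subst.simps(2,3) par.par_beta subst_subst zero_less_Suc Suc_eq_plus1 par_lift)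
qed auto

lemma par_diamond: "par M N1 \<Longrightarrow> par M N2 \<Longrightarrow> \<exists>P. par N1 P \<and> par N2 P"
  by (induct M N1 arbitrary: N2 rule: par.induct) blast+

lemma beta_imp_par: "beta s t \<Longrightarrow> par s t"
  by (induct rule: beta.induct) auto

lemma beta_red_App:
  "beta_red s s' \<Longrightarrow> beta_red t t' \<Longrightarrow> beta_red (App s t) (App s' t')"
proof -
  have "beta_red (App s t) (App s' t)" if "beta_red s s'" for s s' t
    using that by induct (auto intro: rtranclp.rtrancl_into_rtrancl beta.intros)
  moreover have "beta_red (App s t) (App s t')" if "beta_red t t'" for s t t'
    using that by induct (auto intro: rtranclp.rtrancl_into_rtrancl beta.intros)
  ultimately show "beta_red s s' \<Longrightarrow> beta_red t t' \<Longrightarrow> beta_red (App s t) (App s' t')"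
    by (blast intro: rtranclp_trans)
qed

lemma beta_red_Abs: "beta_red s s' \<Longrightarrow> beta_red (Abs s) (Abs s')"
  by (induct rule: rtranclp_induct) (auto intro: rtranclp.rtrancl_into_rtrancl beta.intros)

lemma par_imp_beta_red: "par s t \<Longrightarrow> beta_red s t"
proof (induct rule: par.induct)
  case (par_beta s s' t t')
  then have "beta_red (App (Abs s) t) (App (Abs s') t')"
    by (simp add: beta_red_Abs beta_red_App)
  then show ?case by (meson beta.beta_redex rtranclp.rtrancl_into_rtrancl)
qed (auto intro: beta_red_Abs beta_red_App)

lemma par_rtranclp_eq_beta_red: "par\<^sup>*\<^sup>* = beta_red"
  by (rule rtranclp_subset) (blast intro: beta_imp_par par_imp_beta_red)+

lemma confluentp_beta: "confluentp beta"
proof -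
  have "strong_confluentp par"
  proof
    fix x y z
    assume "par x y" "par x z"
    then obtain u where "par y u" "par z u"
      using par_diamond by blast
    then show "\<exists>u. par\<^sup>*\<^sup>* y u \<and> par\<^sup>=\<^sup>= z u"
      by blast
  qed
  then have "confluentp par"
    by (rule strong_confluentp_imp_confluentp)
  then show ?thesis
    unfolding confluentp_def rtranclp_conversep par_rtranclp_eq_beta_red .
qed

theorem church_rosser:
  assumes "beta_eq M N"
  obtains Z where "beta_red M Z" "beta_red N Z"
proof -
  have "sup beta beta\<inverse>\<inverse> = symclp beta"
    by (auto simp: fun_eq_iff symclp_def)
  with assms have "equivclp beta M N"
    by (simp add: equivclp_def)
  moreover have "equivclp beta = beta_red OO beta\<inverse>\<inverse>\<^sup>*\<^sup>*"
    by (simp add: semiconfluentp_equivclp confluentp_imp_semiconfluentp confluentp_beta)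
  ultimately obtain Z where "beta_red M Z" "beta\<inverse>\<inverse>\<^sup>*\<^sup>* Z N"
    by auto
  then show ?thesis
    using that by (simp add: rtranclp_conversep)
qed

section \<open>Head normal forms\<close>

lemma head_deterministic: "head M A \<Longrightarrow> head M B \<Longrightarrow> A = B"
proof (induct M A arbitrary: B rule: head.induct)
  case (head_redex s t)
  then show ?case
    by (cases rule: head.cases) auto
next
  case (head_app s s' u)
  from head_app.prems head_app.hyps(3) show ?case
    by (cases rule: head.cases) (auto simp: head_app.hyps(2))
next
  case (head_abs s s')
  from head_abs.prems show ?case
    by (cases rule: head.cases) (auto simp: head_abs.hyps(2))
qed

lemma var_app_not_head: "is_var_app H \<Longrightarrow> \<not> head H X"
proof (induct H arbitrary: X)
  case (App H1 H2)
  show ?case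
  proof
    assume "head (App H1 H2) X"
    then show False
      using App by (cases rule: head.cases) auto
  qed
qed (auto elim: head.cases)

lemma hnf_not_head: "is_hnf H \<Longrightarrow> \<not> head H X"
proof (induct H arbitrary: X)
  case (Abs H)
  show ?case
  proof
    assume "head (Abs H) X"
    then show False
      using Abs by (cases rule: head.cases) auto
  qed
qed (simp_all add: var_app_not_head)

lemma relpowp_head_from_hnf: "is_hnf H \<Longrightarrow> (head ^^ k) H H' \<Longrightarrow> k = 0 \<and> H' = H"
proof (cases k)
  case (Suc k')
  moreover assume "is_hnf H" "(head ^^ k) H H'"
  ultimately show ?thesis
    by (metis relpowp_Suc_D2 hnf_not_head)
qed simp

lemma relpowp_head_hnf_unique:
  "(head ^^ a) N H1 \<Longrightarrow> is_hnf H1 \<Longrightarrow> (head ^^ b) N H2 \<Longrightarrow> is_hnf H2 \<Longrightarrow> a = b \<and> H1 = H2"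
proof (induct a arbitrary: N b)
  case 0
  then show ?case
    using relpowp_head_from_hnf by auto
next
  case (Suc a)
  then obtain N1 where N1: "head N N1" "(head ^^ a) N1 H1"
    by (metis relpowp_Suc_D2)
  moreover obtain b' where "b = Suc b'"
    using Suc.prems(3,4) N1(1) relpowp_head_from_hnf hnf_not_head by (cases b) auto
  ultimately show ?case
    using Suc by (metis relpowp_Suc_D2 head_deterministic)
qed

lemma hsteps_hnf_of_eq:
  assumes "(head ^^ k) N H" "is_hnf H"
  shows "hsteps N = k" "hnf_of N = H"
proof -
  have "\<exists>H. (head ^^ hsteps N) N H \<and> is_hnf H"
    unfolding hsteps_def by (rule LeastI[of _ k]) (use assms in blast)
  then show "hsteps N = k"
    using relpowp_head_hnf_unique[OF assms] by blast
  then show "hnf_of N = H"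
    unfolding hnf_of_def using assms relpowp_head_hnf_unique[OF assms] by blast
qed

lemma has_hnf_hnf_of:
  assumes "has_hnf M"
  shows "(head ^^ hsteps M) M (hnf_of M)" "is_hnf (hnf_of M)"
  using assms hsteps_hnf_of_eq unfolding has_hnf_def by metis+

section \<open>Parallel reduction shortens head reduction\<close>

lemma var_app_imp_hnf: "is_var_app s \<Longrightarrow> is_hnf s"
  by (cases s) simp_all

lemma par_var_app: "par s t \<Longrightarrow> is_var_app s \<Longrightarrow> is_var_app t"
  by (induct rule: par.induct) auto

lemma par_hnf: "par s t \<Longrightarrow> is_hnf s \<Longrightarrow> is_hnf t"
  by (induct rule: par.induct) (auto dest: par_var_app)

text \<open>A head step is either contracted by a parallel step or can be replayed after it. Whether
  the term is an abstraction is tracked because it is the side condition of \<open>head_app\<close>.\<close>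

lemma par_head_step:
  "head M M1 \<Longrightarrow> par M N \<Longrightarrow>
   par M1 N \<or> (\<exists>N1. head N N1 \<and> par M1 N1 \<and> (\<exists>b. N = Abs b) = (\<exists>b. M = Abs b))"
proof (induct M M1 arbitrary: N rule: head.induct)
  case (head_redex s t)
  then show ?case
    by (auto intro: head.head_redex)
next
  case (head_app s s' u)
  from head_app.prems head_app.hyps(3) obtain a u' where N: "N = App a u'" "par s a" "par u u'"
    by auto
  from head_app.hyps(2)[OF N(2)] show ?case
  proof
    assume "\<exists>a1. head a a1 \<and> par s' a1 \<and> (\<exists>b. a = Abs b) = (\<exists>b. s = Abs b)"
    with head_app.hyps(3) N show ?thesis
      by (auto intro: head.head_app)
  qed (use N in auto)
next
  case (head_abs s s')
  then obtain a where "N = Abs a" "par s a"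
    by auto
  with head_abs.hyps(2)[OF \<open>par s a\<close>] show ?case
    by (auto intro: head.head_abs)
qed

lemma par_relpowp_head_hnf:
  "(head ^^ k) M H \<Longrightarrow> is_hnf H \<Longrightarrow> par M N \<Longrightarrow>
   \<exists>k' H'. k' \<le> k \<and> (head ^^ k') N H' \<and> is_hnf H' \<and> par H H'"
proof (induct k arbitrary: M N)
  case 0
  then show ?case
    using par_hnf by auto
next
  case (Suc k)
  then obtain M1 where M1: "head M M1" "(head ^^ k) M1 H"
    by (metis relpowp_Suc_D2)
  from par_head_step[OF M1(1) Suc.prems(3)] show ?case
  proof
    assume "par M1 N"
    with Suc.hyps[OF M1(2) Suc.prems(2)] show ?thesis
      by (meson le_Suc_eq)
  next
    assume "\<exists>N1. head N N1 \<and> par M1 N1 \<and> (\<exists>b. N = Abs b) = (\<exists>b. M = Abs b)"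
    then obtain N1 where "head N N1" "par M1 N1"
      by blast
    with Suc.hyps[OF M1(2) Suc.prems(2)] show ?thesis
      by (meson Suc_le_mono relpowp_Suc_I2)
  qed
qed

lemma par_has_hnf:
  assumes "has_hnf M" "par M N"
  shows "has_hnf N" "hsteps N \<le> hsteps M" "par (hnf_of M) (hnf_of N)"
proof -
  obtain k H where "k \<le> hsteps M" "(head ^^ k) N H" "is_hnf H" "par (hnf_of M) H"
    using par_relpowp_head_hnf has_hnf_hnf_of[OF assms(1)] assms(2) by blast
  then show "has_hnf N" "hsteps N \<le> hsteps M" "par (hnf_of M) (hnf_of N)"
    unfolding has_hnf_def using hsteps_hnf_of_eq by auto
qed

section \<open>Standardization\<close>

inductive whead :: "dB \<Rightarrow> dB \<Rightarrow> bool" where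
  whead_redex: "whead (App (Abs s) t) (subst s t 0)"
| whead_app: "whead s s' \<Longrightarrow> whead (App s u) (App s' u)"

lemma whead_imp_head: "whead s t \<Longrightarrow> head s t"
  by (induct rule: whead.induct) (auto elim: whead.cases intro: head.intros)

lemma whead_lift: "whead s t \<Longrightarrow> whead (lift s k) (lift t k)"
proof (induct arbitrary: k rule: whead.induct)
  case (whead_redex s t)
  then show ?case
    using whead.whead_redex[of "lift s (Suc k)" "lift t k"] by simp
qed (auto intro: whead.intros)

lemma whead_subst: "whead s t \<Longrightarrow> whead (subst s N k) (subst t N k)"
proof (induct arbitrary: k N rule: whead.induct)
  case (whead_redex s t)
  then show ?case
    using whead.whead_redex[of "subst s (lift N 0) (Suc k)" "subst t N k"] subst_subst[of 0 k s N t]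
    by simp
qed (auto intro: whead.intros)

lemma wheads_lift: "whead\<^sup>*\<^sup>* s t \<Longrightarrow> whead\<^sup>*\<^sup>* (lift s k) (lift t k)"
  by (induct rule: rtranclp_induct) (auto intro: rtranclp.rtrancl_into_rtrancl whead_lift)

lemma wheads_subst: "whead\<^sup>*\<^sup>* s t \<Longrightarrow> whead\<^sup>*\<^sup>* (subst s N k) (subst t N k)"
  by (induct rule: rtranclp_induct) (auto intro: rtranclp.rtrancl_into_rtrancl whead_subst)

lemma wheads_App: "whead\<^sup>*\<^sup>* s t \<Longrightarrow> whead\<^sup>*\<^sup>* (App s u) (App t u)"
  by (induct rule: rtranclp_induct) (auto intro: rtranclp.rtrancl_into_rtrancl whead_app)

text \<open>Standard reduction in Takahashi's style: weak head reduction to some term, followed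
  by standard reductions inside its immediate subterms.\<close>

inductive std :: "dB \<Rightarrow> dB \<Rightarrow> bool" where
  std_var: "whead\<^sup>*\<^sup>* M (Var i) \<Longrightarrow> std M (Var i)"
| std_abs: "whead\<^sup>*\<^sup>* M (Abs P) \<Longrightarrow> std P Q \<Longrightarrow> std M (Abs Q)"
| std_app: "whead\<^sup>*\<^sup>* M (App P1 P2) \<Longrightarrow> std P1 Q1 \<Longrightarrow> std P2 Q2 \<Longrightarrow> std M (App Q1 Q2)"

lemma std_refl: "std M M"
  by (induct M) (auto intro: std.intros)

lemma wheads_std: "whead\<^sup>*\<^sup>* M M' \<Longrightarrow> std M' N \<Longrightarrow> std M N"
  by (erule std.cases) (auto intro: std.intros rtranclp_trans)

lemma std_lift: "std M N \<Longrightarrow> std (lift M k) (lift N k)"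
proof (induct arbitrary: k rule: std.induct)
  case (std_var M i)
  then show ?case
    using wheads_lift[OF std_var, of k] by (auto intro: std.std_var)
next
  case (std_abs M P Q)
  then show ?case
    using wheads_lift[OF std_abs(1), of k] by (auto intro: std.std_abs)
next
  case (std_app M P1 P2 Q1 Q2)
  then show ?case
    using wheads_lift[OF std_app(1), of k] by (auto intro: std.std_app)
qed

lemma std_subst: "std M M' \<Longrightarrow> std N N' \<Longrightarrow> std (subst M N k) (subst M' N' k)"
proof (induct arbitrary: N N' k rule: std.induct)
  case (std_var M i)
  then show ?case
    using wheads_subst[OF std_var(1), of N k] by (auto intro: std.std_var wheads_std)
next
  case (std_abs M P Q)
  then show ?case
    using wheads_subst[OF std_abs(1), of N k] std_abs(3)[OF std_lift[OF std_abs(4)]]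
    by (auto intro: std.std_abs)
next
  case (std_app M P1 P2 Q1 Q2)
  then show ?case
    using wheads_subst[OF std_app(1), of N k] by (auto intro: std.std_app)
qed

lemma std_beta: "std M N \<Longrightarrow> beta N P \<Longrightarrow> std M P"
proof (induct arbitrary: P rule: std.induct)
  case (std_var M i)
  then show ?case
    by (auto elim: beta.cases)
next
  case (std_abs M P0 Q)
  then show ?case
    by (auto elim: beta.cases intro: std.std_abs)
next
  case (std_app M P1 P2 Q1 Q2)
  from std_app.prems consider
      (redex) R where "Q1 = Abs R" "P = subst R Q2 0"
    | (left) Q1' where "beta Q1 Q1'" "P = App Q1' Q2"
    | (right) Q2' where "beta Q2 Q2'" "P = App Q1 Q2'"
    by (cases rule: beta.cases) auto
  then show ?case
  proof cases
    case redex
    from std_app(2)[unfolded redex(1)] obtain P1' where "whead\<^sup>*\<^sup>* P1 (Abs P1')" "std P1' R"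
      by (cases rule: std.cases) auto
    with std_app(1) have "whead\<^sup>*\<^sup>* M (subst P1' P2 0)"
      by (meson rtranclp_trans wheads_App rtranclp.rtrancl_into_rtrancl whead.whead_redex)
    moreover have "std (subst P1' P2 0) (subst R Q2 0)"
      using std_subst \<open>std P1' R\<close> std_app(4) by blast
    ultimately show ?thesis
      using redex wheads_std by simp
  qed (use std_app in \<open>auto intro: std.std_app\<close>)
qed

lemma beta_red_imp_std: "beta_red M N \<Longrightarrow> std M N"
  by (induct rule: rtranclp_induct) (auto intro: std_refl std_beta)

lemma std_var_app: "std M N \<Longrightarrow> is_var_app N \<Longrightarrow> \<exists>H. whead\<^sup>*\<^sup>* M H \<and> is_var_app H"
proof (induct rule: std.induct)
  case (std_app M P1 P2 Q1 Q2)
  then obtain H where "whead\<^sup>*\<^sup>* P1 H" "is_var_app H"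
    by auto
  with std_app(1) have "whead\<^sup>*\<^sup>* M (App H P2)" "is_var_app (App H P2)"
    by (auto intro: rtranclp_trans wheads_App)
  then show ?case
    by blast
qed auto

lemma wheads_imp_heads: "whead\<^sup>*\<^sup>* s t \<Longrightarrow> head\<^sup>*\<^sup>* s t"
  by (induct rule: rtranclp_induct) (auto intro: rtranclp.rtrancl_into_rtrancl whead_imp_head)

lemma heads_Abs: "head\<^sup>*\<^sup>* s t \<Longrightarrow> head\<^sup>*\<^sup>* (Abs s) (Abs t)"
  by (induct rule: rtranclp_induct) (auto intro: rtranclp.rtrancl_into_rtrancl head.head_abs)

lemma std_hnf: "std M N \<Longrightarrow> is_hnf N \<Longrightarrow> \<exists>H. head\<^sup>*\<^sup>* M H \<and> is_hnf H"
proof (induct rule: std.induct)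
  case (std_var M i)
  then show ?case
    by (auto dest: wheads_imp_heads)
next
  case (std_abs M P Q)
  then obtain H where "head\<^sup>*\<^sup>* P H" "is_hnf H"
    by auto
  with std_abs(1) have "head\<^sup>*\<^sup>* M (Abs H)" "is_hnf (Abs H)"
    by (auto intro: rtranclp_trans wheads_imp_heads heads_Abs)
  then show ?case
    by blast
next
  case (std_app M P1 P2 Q1 Q2)
  then obtain H where "whead\<^sup>*\<^sup>* M H" "is_var_app H"
    using std_var_app[OF std.std_app[OF std_app(1,2,4)]] by auto
  with var_app_imp_hnf show ?case
    by (blast dest: wheads_imp_heads)
qed

lemma head_imp_beta: "head s t \<Longrightarrow> beta s t"
  by (induct rule: head.induct) (auto intro: beta.intros)

lemma beta_red_has_hnf_reflect: "beta_red M N \<Longrightarrow> has_hnf N \<Longrightarrow> has_hnf M"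
proof -
  assume "beta_red M N" "has_hnf N"
  then obtain k H where "(head ^^ k) N H" "is_hnf H"
    unfolding has_hnf_def by blast
  then have "beta_red N H"
    by (metis relpowp_imp_rtranclp head_imp_beta mono_rtranclp)
  with \<open>beta_red M N\<close> have "std M H"
    by (meson rtranclp_trans beta_red_imp_std)
  then obtain H' where "head\<^sup>*\<^sup>* M H'" "is_hnf H'"
    using std_hnf \<open>is_hnf H\<close> by blast
  then show "has_hnf M"
    unfolding has_hnf_def by (metis rtranclp_imp_relpowp)
qed

section \<open>Clocked Boehm trees\<close>

abbreviation entry_le :: "(node \<times> nat option) option \<Rightarrow> (node \<times> nat option) option \<Rightarrow> bool" where
  "entry_le \<equiv> rel_option (rel_prod (=) (rel_option (\<le>)))"

lemma atree_le_iff_entry_le: "atree_le T1 T2 \<longleftrightarrow> (\<forall>p. entry_le (T1 p) (T2 p))"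
proof -
  have "(map_option fst x = map_option fst y \<and>
        (\<forall>x1 x2. x = Some x1 \<longrightarrow> y = Some x2 \<longrightarrow>
           (snd x1 = None \<and> snd x2 = None) \<or>
           (\<exists>k1 k2. snd x1 = Some k1 \<and> snd x2 = Some k2 \<and> k1 \<le> k2)))
        \<longleftrightarrow> entry_le x y" for x y :: "(node \<times> nat option) option"
    by (cases x; cases y) (auto simp: rel_prod_sel option.rel_sel)
  then show ?thesis
    unfolding atree_le_def by blast
qed

lemma transp_entry_le: "transp entry_le"
  by (intro option.rel_transp prod.rel_transp) (simp_all add: transp_def)

lemma spine_Cons:
  "spine H a (x # p) =
    (case H of
      Abs t \<Rightarrow> if x = 0 then spine t None p else None
    | App s t \<Rightarrow> if x = 1 then spine s None p else if x = 2 then bt t p else None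
    | Var i \<Rightarrow> None)"
  by (cases "(H, a, x # p)" rule: spine.cases) (auto split: dB.split)

lemma par_spine_le:
  assumes "\<forall>q. length q < length p \<longrightarrow> (\<forall>M N. par M N \<longrightarrow> entry_le (bt N q) (bt M q))"
    and "is_hnf H" "par H H'" "rel_option (\<le>) a' a"
  shows "entry_le (spine H' a' p) (spine H a p)"
  using assms
proof (induct H arbitrary: p H' a a')
  case (Var i)
  then show ?case
    by (cases p) (auto simp: spine_Cons)
next
  case (Abs t)
  then obtain t' where H': "H' = Abs t'" "par t t'"
    by auto
  show ?case
  proof (cases p)
    case (Cons x q)
    have "entry_le (spine t' None q) (spine t None q)"
      using Abs.hyps[of q t' None None] Abs.prems Cons H' by (auto simp del: bt.simps)
    then show ?thesis
      using Cons H' by (simp add: spine_Cons)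
  qed (use Abs.prems H' in simp)
next
  case (App s u)
  then obtain s' u' where H': "H' = App s' u'" "par s s'" "par u u'"
    by auto
  show ?case
  proof (cases p)
    case (Cons x q)
    have "entry_le (spine s' None q) (spine s None q)"
      using App.hyps(1)[of q s' None None] App.prems Cons H' var_app_imp_hnf[of s]
      by (auto simp del: bt.simps)
    moreover have "entry_le (bt u' q) (bt u q)"
      using App.prems(1) Cons H' by (simp del: bt.simps)
    ultimately show ?thesis
      using Cons H' by (simp add: spine_Cons del: bt.simps)
  qed (use App.prems H' in simp)
qed

lemma par_bt_le: "par M N \<Longrightarrow> entry_le (bt N p) (bt M p)"
proof (induct p arbitrary: M N rule: measure_induct_rule[where f = length])
  case (less p)
  have IH: "\<forall>q. length q < length p \<longrightarrow> (\<forall>M N. par M N \<longrightarrow> entry_le (bt N q) (bt M q))"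
    using less by blast
  show ?case
  proof (cases "has_hnf M")
    case True
    note hnf_N = par_has_hnf[OF True less.prems]
    show ?thesis
      using True hnf_N par_spine_le[OF IH has_hnf_hnf_of(2)[OF True] hnf_N(3)] by simp
  next
    case False
    then have "\<not> has_hnf N"
      using less.prems par_imp_beta_red beta_red_has_hnf_reflect by blast
    with False show ?thesis
      by (simp add: option.rel_refl)
  qed
qed

lemma beta_red_bt_le: "beta_red N Z \<Longrightarrow> atree_le (bt Z) (bt N)"
  unfolding atree_le_iff_entry_le par_rtranclp_eq_beta_red[symmetric]
proof (induct rule: rtranclp_induct)
  case base
  show ?case
    by (simp add: option.rel_refl prod.rel_refl)
next
  case (step y z)
  show ?case
  proof
    fix p
    from par_bt_le[OF step(2)] step(3) show "entry_le (bt z p) (bt N p)"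
      by (meson transpD transp_entry_le)
  qed
qed

theorem theorem4p6:
  fixes M N :: dB
  assumes "\<not> (\<exists>M'. beta_red M M' \<and> atree_le (BTc M') (BTc N))"
  shows "\<not> beta_eq M N"
proof
  assume "beta_eq M N"
  then obtain Z where "beta_red M Z" "beta_red N Z"
    by (rule church_rosser)
  with assms show False
    using beta_red_bt_le by blast
qed

end
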